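(* Let $M\subset\mathbb{C}P^2$ be a compact minimal Lagrangian surface. Then for every $q\in\mathbb{C}P^2$, $$\mathrm{dist}(q,M)\le \arccos\Bigl(\tfrac{1}{\sqrt3}\Bigr).$$
   Context: $\mathbb{C}P^2$ carries the Fubini–Study metric normalized so that the Hopf map $S^5\to\mathbb{C}P^2$ is a Riemannian submersion (holomorphic sectional curvature $4$, diameter $\pi/2$); $\mathrm{dist}$ is the Riemannian distance. *)

theory Defs
  imports "HOL-Analysis.Analysis"
begin

text \<open>A point of CP^2 is represented by any unit vector of C^3 lying over it;
  a subset M of CP^2 is represented by its full preimage in S^5 (a set of unit
  vectors closed under multiplication by unit complex scalars).\<close>

definition herm :: "complex^3 \<Rightarrow> complex^3 \<Rightarrow> complex" where
  "herm z w = (\<Sum>i\<in>UNIV. z$i * cnj (w$i))"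

definition S5 :: "(complex^3) set" where
  "S5 = sphere 0 1"

text \<open>Fubini--Study distance (holomorphic sectional curvature 4, diameter pi/2)
  between the points of CP^2 represented by unit vectors z and w.\<close>
definition fs_dist :: "complex^3 \<Rightarrow> complex^3 \<Rightarrow> real" where
  "fs_dist z w = arccos (cmod (herm z w))"

definition fs_setdist :: "complex^3 \<Rightarrow> (complex^3) set \<Rightarrow> real" where
  "fs_setdist q Mt = (INF w\<in>Mt. fs_dist q w)"

definition hopf_saturated :: "(complex^3) set \<Rightarrow> bool" where
  "hopf_saturated Mt \<longleftrightarrow> Mt \<subseteq> S5 \<and> (\<forall>z\<in>Mt. \<forall>c. cmod c = 1 \<longrightarrow> c *s z \<in> Mt)"

fun dd :: "(real \<times> real \<Rightarrow> 'b::real_normed_vector) \<Rightarrow> (real \<times> real) list \<Rightarrow> (real \<times> real \<Rightarrow> 'b)" where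
  "dd F [] = F"
| "dd F (h # hs) = (\<lambda>x. frechet_derivative (dd F hs) (at x) h)"

definition smooth_on :: "(real \<times> real) set \<Rightarrow> (real \<times> real \<Rightarrow> 'b::real_normed_vector) \<Rightarrow> bool" where
  "smooth_on U F \<longleftrightarrow> (\<forall>hs. \<forall>x\<in>U. dd F hs differentiable (at x))"

abbreviation e1 :: "real \<times> real" where "e1 \<equiv> (1, 0)"
abbreviation e2 :: "real \<times> real" where "e2 \<equiv> (0, 1)"

text \<open>F : U \<rightarrow> S^5 is a horizontal (Legendrian) lift of a smooth immersed surface in CP^2
  which is Lagrangian and minimal.  Since the Hopf map is a Riemannian submersion and
  F is horizontal, the induced metric is g_ij = <F_i,F_j>, and by O'Neill the mean
  curvature vector of the projected surface in CP^2 lifts to the component of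
  g^ij F_ij orthogonal to span_R {F, iF, F_u, F_v}.  The vector
  g22 F_uu - 2 g12 F_uv + g11 F_vv is (det g) g^ij F_ij.\<close>
definition min_lag_piece :: "(real \<times> real) set \<Rightarrow> (real \<times> real \<Rightarrow> complex^3) \<Rightarrow> bool" where
  "min_lag_piece U F \<longleftrightarrow>
     open U \<and> smooth_on U F \<and>
     (\<forall>x\<in>U.
        let Fu = dd F [e1] x; Fv = dd F [e2] x;
            Fuu = dd F [e1, e1] x; Fuv = dd F [e1, e2] x; Fvv = dd F [e2, e2] x;
            g11 = inner Fu Fu; g12 = inner Fu Fv; g22 = inner Fv Fv
        in F x \<in> S5
         \<and> (\<forall>a b. a *\<^sub>R Fu + b *\<^sub>R Fv = 0 \<longrightarrow> a = 0 \<and> b = 0)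
         \<and> herm Fu (F x) = 0 \<and> herm Fv (F x) = 0
         \<and> Im (herm Fu Fv) = 0
         \<and> g22 *\<^sub>R Fuu - (2 * g12) *\<^sub>R Fuv + g11 *\<^sub>R Fvv
              \<in> span {F x, \<i> *s F x, Fu, Fv})"

text \<open>Mt is the preimage in S^5 of a compact minimal Lagrangian surface of CP^2:
  compact, nonempty, Hopf-saturated, and near each of its points it coincides with
  the S^1-orbit of a smooth minimal Lagrangian immersed piece passing through the point
  (so the surface has no boundary).\<close>
definition compact_min_lag_surface :: "(complex^3) set \<Rightarrow> bool" where
  "compact_min_lag_surface Mt \<longleftrightarrow>
     Mt \<noteq> {} \<and> compact Mt \<and> hopf_saturated Mt \<and>
     (\<forall>p\<in>Mt. \<exists>V U F. open V \<and> p \<in> V \<and> min_lag_piece U F \<and>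
         p \<in> F ` U \<and> F ` U \<subseteq> Mt \<and>
         Mt \<inter> V \<subseteq> {c *s F x | c x. cmod c = 1 \<and> x \<in> U})"

end

theory Submission
  imports Defs
begin

(* Let c = herm q (F x) be the Hermitian product of q with the point F x of the surface
  that is closest to q, i.e. where |herm q w| is maximal.  Along every direction the
  function |herm q F|^2 has vanishing first and nonpositive second derivative at x.  Summing
  the second-order conditions over a g-orthonormal frame (u1, u2) of the tangent plane
  (g the induced metric) gives
    Re (cnj c * herm q (det g * g^ij F_ij)) + det g * (|herm q u1|^2 + |herm q u2|^2) <= 0.
  Differentiating herm F_i F = 0 shows that the F-component of det g * g^ij F_ij is
  -2 det g; by minimality the remaining components lie along iF, F_u, F_v, which contribute
  nothing by the first-order condition.  Since F is Legendrian and the surface is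
  Lagrangian, (F, u1, u2) is a unitary frame of C^3, so |herm q u1|^2 + |herm q u2|^2 =
  1 - |c|^2.  Hence -2|c|^2 + 1 - |c|^2 <= 0, i.e. |c| >= 1/sqrt 3, and the distance
  arccos |c| is at most arccos (1/sqrt 3). *)

section \<open>The Hermitian product on C^3\<close>

lemma Re_herm: "Re (herm a b) = inner a b"
  by (simp add: herm_def inner_vec_def inner_complex_def)

lemma Im_herm: "Im (herm a b) = inner a (\<i> *s b)"
  by (simp add: herm_def inner_vec_def inner_complex_def algebra_simps)

lemma cmod_herm_sq: "(cmod (herm a b))\<^sup>2 = (inner a b)\<^sup>2 + (inner a (\<i> *s b))\<^sup>2"
  by (simp add: cmod_power2 Re_herm Im_herm)

lemma herm_commute: "herm b a = cnj (herm a b)"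
  by (simp add: herm_def mult.commute)

lemma herm_self: "herm a a = of_real (inner a a)"
  by (simp add: complex_eq_iff Re_herm Im_herm inner_vec_def inner_complex_def)

lemma herm_add_left: "herm (a + b) c = herm a c + herm b c"
  by (simp add: herm_def distrib_right sum.distrib)

lemma herm_add_right: "herm a (b + c) = herm a b + herm a c"
  by (simp add: herm_def distrib_left sum.distrib)

lemma herm_diff_right: "herm a (b - c) = herm a b - herm a c"
  by (simp add: herm_def right_diff_distrib sum_subtractf)

lemma herm_scaleR_left: "herm (r *\<^sub>R a) b = r *\<^sub>R herm a b"
  by (simp add: herm_def sum_distrib_left scaleR_conv_of_real[where 'a=complex] mult.assoc)

lemma herm_scaleR_right: "herm a (r *\<^sub>R b) = r *\<^sub>R herm a b"
  by (simp add: herm_def sum_distrib_left scaleR_conv_of_real[where 'a=complex] mult_ac)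

lemma herm_smult_left: "herm (c *s a) b = c * herm a b"
  by (simp add: herm_def sum_distrib_left mult_ac)

lemma herm_smult_right: "herm a (c *s b) = cnj c * herm a b"
  by (simp add: herm_def sum_distrib_left mult_ac)

lemma bounded_linear_herm_right: "bounded_linear (herm a)"
  unfolding linear_conv_bounded_linear[symmetric]
  by (rule linearI) (simp_all add: herm_add_right herm_scaleR_right)

lemma inner_smult_i [simp]: "inner (\<i> *s a) (\<i> *s b) = inner a b"
  by (simp add: inner_vec_def inner_complex_def algebra_simps)

lemma norm_smult_i [simp]: "norm (\<i> *s a) = norm a"
  by (simp add: norm_eq_sqrt_inner)

lemma inner_self_smult_i [simp]: "inner a (\<i> *s a) = 0"
  by (simp add: inner_vec_def inner_complex_def algebra_simps)

section \<open>Orthonormal frames\<close>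

lemma inner_self_eq_sum_orthonormal:
  fixes e :: "nat \<Rightarrow> 'a::euclidean_space"
  assumes orthonormal: "\<And>i j. i < DIM('a) \<Longrightarrow> j < DIM('a) \<Longrightarrow> e i \<bullet> e j = (if i = j then 1 else 0)"
  shows "x \<bullet> x = (\<Sum>i<DIM('a). (x \<bullet> e i)\<^sup>2)"
proof -
  define B where "B = e ` {..<DIM('a)}"
  have inj: "inj_on e {..<DIM('a)}"
    by (rule inj_onI) (metis orthonormal lessThan_iff zero_neq_one)
  have orth: "pairwise orthogonal B"
    unfolding B_def pairwise_def orthogonal_def using orthonormal by fastforce
  have unit: "norm b = 1" if "b \<in> B" for b
    using that orthonormal by (auto simp: B_def norm_eq_sqrt_inner)
  have "independent B"
    using pairwise_orthogonal_independent[OF orth] unit by force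
  moreover have "card B = DIM('a)"
    using inj by (simp add: B_def card_image)
  ultimately have "span B = UNIV"
    using card_ge_dim_independent[of B UNIV] by auto
  then have "x \<bullet> x = x \<bullet> (\<Sum>b\<in>B. (x \<bullet> b) *\<^sub>R b)"
    using orthonormal_basis_expand[OF orth unit] by (simp add: B_def)
  also have "\<dots> = (\<Sum>b\<in>B. (x \<bullet> b)\<^sup>2)"
    by (simp add: inner_sum_right power2_eq_square)
  also have "\<dots> = (\<Sum>i<DIM('a). (x \<bullet> e i)\<^sup>2)"
    by (simp add: B_def sum.reindex[OF inj])
  finally show ?thesis .
qed

lemma inner_self_eq_sum_herm_unitary:
  fixes b1 b2 b3 q :: "complex^3"
  assumes "herm b1 b1 = 1" "herm b2 b2 = 1" "herm b3 b3 = 1"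
    and "herm b1 b2 = 0" "herm b1 b3 = 0" "herm b2 b3 = 0"
  shows "inner q q = (cmod (herm q b1))\<^sup>2 + (cmod (herm q b2))\<^sup>2 + (cmod (herm q b3))\<^sup>2"
proof -
  define e where "e k = [b1, \<i> *s b1, b2, \<i> *s b2, b3, \<i> *s b3] ! k" for k
  have herm_sym: "herm b2 b1 = 0" "herm b3 b1 = 0" "herm b3 b2 = 0"
    using assms by (metis complex_cnj_zero herm_commute)+
  have "e i \<bullet> e j = (if i = j then 1 else 0)" if "i < 6" "j < 6" for i j
  proof -
    have "i \<in> {0,1,2,3,4,5}" "j \<in> {0,1,2,3,4,5}" using that by auto
    then show ?thesis
      using assms herm_sym
      by (auto simp: e_def herm_smult_left herm_smult_right simp flip: Re_herm)
  qed
  moreover have "DIM(complex^3) = 6"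
    by simp
  ultimately have "inner q q = (\<Sum>k<6. (inner q (e k))\<^sup>2)"
    using inner_self_eq_sum_orthonormal[of e q] by simp
  then show ?thesis
    unfolding cmod_herm_sq by (simp add: eval_nat_numeral e_def)
qed

lemma bessel_inequality_pair:
  fixes x u v :: "'a::real_inner"
  assumes "u \<bullet> u = 1" "v \<bullet> v = 1" "u \<bullet> v = 0"
  shows "(x \<bullet> u)\<^sup>2 + (x \<bullet> v)\<^sup>2 \<le> x \<bullet> x"
proof -
  let ?r = "x - (x \<bullet> u) *\<^sub>R u - (x \<bullet> v) *\<^sub>R v"
  have "0 \<le> ?r \<bullet> ?r"
    by simp
  also have "\<dots> = x \<bullet> x - (x \<bullet> u)\<^sup>2 - (x \<bullet> v)\<^sup>2"
    using assms by (simp add: inner_diff_left inner_diff_right inner_commute power2_eq_square algebra_simps)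
  finally show ?thesis by simp
qed

lemma cmod_herm_le_norm: "cmod (herm a b) \<le> norm a * norm b"
proof (cases "b = 0")
  case True
  then show ?thesis by (simp add: herm_def)
next
  case False
  let ?u = "b /\<^sub>R norm b" and ?v = "(\<i> *s b) /\<^sub>R norm b"
  have "?u \<bullet> ?u = 1" "?v \<bullet> ?v = 1" "?u \<bullet> ?v = 0"
    using False by (simp_all add: dot_square_norm power2_eq_square)
  then have "(a \<bullet> ?u)\<^sup>2 + (a \<bullet> ?v)\<^sup>2 \<le> (norm a)\<^sup>2"
    by (metis bessel_inequality_pair dot_square_norm)
  moreover have "(a \<bullet> ?u)\<^sup>2 + (a \<bullet> ?v)\<^sup>2 = (cmod (herm a b) / norm b)\<^sup>2"
    unfolding cmod_herm_sq inner_scaleR_right power_divide power_mult_distrib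
    using False by (simp add: field_simps)
  ultimately have "cmod (herm a b) / norm b \<le> norm a"
    using power2_le_imp_le by fastforce
  then show ?thesis
    using False by (simp add: divide_le_eq mult.commute)
qed

lemma gram_det_pos:
  fixes u v :: "'a::real_inner"
  assumes indep: "\<And>a b. a *\<^sub>R u + b *\<^sub>R v = 0 \<Longrightarrow> a = 0 \<and> b = 0"
  shows "0 < v \<bullet> v" and "0 < (u \<bullet> u) * (v \<bullet> v) - (u \<bullet> v)\<^sup>2"
proof -
  show v: "0 < v \<bullet> v"
    using indep[of 0 1] by auto
  let ?w = "(v \<bullet> v) *\<^sub>R u - (u \<bullet> v) *\<^sub>R v"
  have "?w \<noteq> 0"
    using indep[of "v \<bullet> v" "- (u \<bullet> v)"] v by auto
  moreover have "?w \<bullet> ?w = (v \<bullet> v) * ((u \<bullet> u) * (v \<bullet> v) - (u \<bullet> v)\<^sup>2)"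
    by (simp add: inner_commute power2_eq_square algebra_simps)
  ultimately show "0 < (u \<bullet> u) * (v \<bullet> v) - (u \<bullet> v)\<^sup>2"
    using v by (metis inner_gt_zero_iff zero_less_mult_pos)
qed

(* adj g = L L^T for the lower triangular L with rows (a1, 0) and (b1, b2) *)
lemma adjugate_cholesky:
  fixes g11 g12 g22 :: real
  assumes "0 < g22" "0 \<le> g11 * g22 - g12\<^sup>2"
  obtains a1 b1 b2 where "a1\<^sup>2 = g22" "a1 * b1 = - g12" "b1\<^sup>2 + b2\<^sup>2 = g11"
proof
  show "(sqrt g22)\<^sup>2 = g22" "sqrt g22 * (- g12 / sqrt g22) = - g12"
    using assms(1) by simp_all
  show "(- g12 / sqrt g22)\<^sup>2 + (sqrt ((g11 * g22 - g12\<^sup>2) / g22))\<^sup>2 = g11"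
    using assms by (simp add: field_simps)
qed

lemma cholesky_frame_gram:
  fixes u v :: "'a::real_inner"
  assumes "a1\<^sup>2 = v \<bullet> v" "a1 * b1 = - (u \<bullet> v)" "b1\<^sup>2 + b2\<^sup>2 = u \<bullet> u"
  defines "w1 \<equiv> a1 *\<^sub>R u + b1 *\<^sub>R v" and "w2 \<equiv> b2 *\<^sub>R v"
  shows "w1 \<bullet> w1 = (u \<bullet> u) * (v \<bullet> v) - (u \<bullet> v)\<^sup>2"
    and "w2 \<bullet> w2 = (u \<bullet> u) * (v \<bullet> v) - (u \<bullet> v)\<^sup>2"
    and "w1 \<bullet> w2 = 0"
proof -
  have "b1\<^sup>2 * (v \<bullet> v) = (a1 * b1)\<^sup>2"
    using assms(1) by (simp add: power_mult_distrib)
  then have b1: "b1\<^sup>2 * (v \<bullet> v) = (u \<bullet> v)\<^sup>2"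
    using assms(2) by simp
  have "w1 \<bullet> w1 = a1\<^sup>2 * (u \<bullet> u) + 2 * (a1 * b1) * (u \<bullet> v) + b1\<^sup>2 * (v \<bullet> v)"
    unfolding w1_def by (simp add: inner_add_left inner_add_right inner_commute power2_eq_square algebra_simps)
  then show "w1 \<bullet> w1 = (u \<bullet> u) * (v \<bullet> v) - (u \<bullet> v)\<^sup>2"
    using assms(1,2) b1 by (simp add: power2_eq_square)
  show "w2 \<bullet> w2 = (u \<bullet> u) * (v \<bullet> v) - (u \<bullet> v)\<^sup>2"
    using assms(3) b1 unfolding w2_def by (simp add: power2_eq_square algebra_simps flip: assms(3))
  have "w1 \<bullet> w2 = b2 * (a1 * (u \<bullet> v) + b1 * (v \<bullet> v))"
    unfolding w1_def w2_def by (simp add: inner_add_left algebra_simps)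
  also have "\<dots> = b2 * a1 * (u \<bullet> v + a1 * b1)"
    by (simp add: algebra_simps power2_eq_square flip: assms(1))
  finally show "w1 \<bullet> w2 = 0"
    using assms(2) by simp
qed

section \<open>Directional derivatives on the plane\<close>

lemma has_vector_derivative_along_line:
  assumes "(f has_derivative f') (at (x + t *\<^sub>R h))"
  shows "((\<lambda>t. f (x + t *\<^sub>R h)) has_vector_derivative f' h) (at t)"
proof -
  have "((\<lambda>t. x + t *\<^sub>R h) has_derivative (\<lambda>s. s *\<^sub>R h)) (at t)"
    by (auto intro!: derivative_eq_intros)
  from has_derivative_compose[OF this assms]
  have "((\<lambda>t. f (x + t *\<^sub>R h)) has_derivative (\<lambda>s. f' (s *\<^sub>R h))) (at t)" .
  then show ?thesis
    using linear_scale[OF has_derivative_linear[OF assms]] by (simp add: has_vector_derivative_def)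
qed

lemma second_difference_estimate:
  fixes f :: "'a::real_normed_vector \<Rightarrow> real"
  assumes Df: "\<And>y. y \<in> cball x (s * (norm h + norm k)) \<Longrightarrow> (f has_derivative Df y) (at y)"
    and A: "linear A" and s: "0 < s" and e: "0 \<le> e"
    and est: "\<And>y. y \<in> cball x (s * (norm h + norm k)) \<Longrightarrow>
                 \<bar>Df y h - Df x h - A (y - x)\<bar> \<le> e * norm (y - x)"
  shows "\<bar>f (x + s *\<^sub>R k + s *\<^sub>R h) - f (x + s *\<^sub>R h) - f (x + s *\<^sub>R k) + f x - s\<^sup>2 * A k\<bar>
           \<le> 2 * e * s\<^sup>2 * (norm h + norm k)"
proof -
  let ?B = "cball x (s * (norm h + norm k))"
  have in_ball: "x + a *\<^sub>R k + t *\<^sub>R h \<in> ?B" if "0 \<le> a" "a \<le> s" "0 \<le> t" "t \<le> s" for a t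
  proof -
    have "norm (a *\<^sub>R k + t *\<^sub>R h) \<le> a * norm k + t * norm h"
      using norm_triangle_ineq[of "a *\<^sub>R k" "t *\<^sub>R h"] that by simp
    also have "\<dots> \<le> s * (norm h + norm k)"
      using mult_right_mono[of a s "norm k"] mult_right_mono[of t s "norm h"] that
      by (simp add: distrib_left)
    finally have "norm ((x + a *\<^sub>R k + t *\<^sub>R h) - x) \<le> s * (norm h + norm k)"
      by (simp add: add.assoc)
    then show ?thesis
      by (metis dist_norm dist_commute mem_cball)
  qed
  define g where "g t = f (x + s *\<^sub>R k + t *\<^sub>R h) - f (x + 0 *\<^sub>R k + t *\<^sub>R h)" for t
  define g' where "g' t = Df (x + s *\<^sub>R k + t *\<^sub>R h) h - Df (x + 0 *\<^sub>R k + t *\<^sub>R h) h" for t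
  have "(g has_real_derivative g' t) (at t)" if "0 \<le> t" "t \<le> s" for t
    unfolding g_def g'_def has_real_derivative_iff_has_vector_derivative
    using s that
    by (intro has_vector_derivative_diff has_vector_derivative_along_line[of f] Df in_ball) auto
  then obtain z where z: "0 < z" "z < s" "g s - g 0 = s * g' z"
    using MVT2[OF s, of g g'] by auto
  define y1 where "y1 = x + s *\<^sub>R k + z *\<^sub>R h"
  define y2 where "y2 = x + 0 *\<^sub>R k + z *\<^sub>R h"
  have y: "y1 \<in> ?B" "y2 \<in> ?B"
    using in_ball[of s z] in_ball[of 0 z] z s unfolding y1_def y2_def by auto
  then have norm_y: "norm (y1 - x) \<le> s * (norm h + norm k)" "norm (y2 - x) \<le> s * (norm h + norm k)"
    by (simp_all add: dist_norm norm_minus_commute)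
  have "A (y1 - x) - A (y2 - x) = s * A k"
    using A unfolding y1_def y2_def by (simp add: linear_add linear_scale)
  then have "\<bar>g' z - s * A k\<bar> = \<bar>(Df y1 h - Df x h - A (y1 - x)) - (Df y2 h - Df x h - A (y2 - x))\<bar>"
    unfolding g'_def y1_def y2_def by simp
  also have "\<dots> \<le> e * norm (y1 - x) + e * norm (y2 - x)"
    using est[OF y(1)] est[OF y(2)] by linarith
  also have "\<dots> \<le> 2 * e * s * (norm h + norm k)"
    using mult_left_mono[OF norm_y(1) e] mult_left_mono[OF norm_y(2) e] by simp
  finally have "\<bar>g' z - s * A k\<bar> \<le> 2 * e * s * (norm h + norm k)" .
  moreover have "f (x + s *\<^sub>R k + s *\<^sub>R h) - f (x + s *\<^sub>R h) - f (x + s *\<^sub>R k) + f x - s\<^sup>2 * A k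
      = s * (g' z - s * A k)"
    using z(3) unfolding g_def by (simp add: power2_eq_square algebra_simps)
  ultimately show ?thesis
    using s by (simp add: abs_mult power2_eq_square mult_left_mono mult_ac)
qed

lemma second_difference_tendsto:
  fixes f :: "'a::real_normed_vector \<Rightarrow> real"
  assumes U: "open U" "x \<in> U"
    and Df: "\<And>y. y \<in> U \<Longrightarrow> (f has_derivative Df y) (at y)"
    and A: "((\<lambda>y. Df y h) has_derivative A) (at x)"
  shows "((\<lambda>s. (f (x + s *\<^sub>R k + s *\<^sub>R h) - f (x + s *\<^sub>R h) - f (x + s *\<^sub>R k) + f x) / s\<^sup>2)
           \<longlongrightarrow> A k) (at_right 0)"
proof (rule tendstoI)
  fix \<epsilon> :: real
  assume "\<epsilon> > 0"
  define c where "c = norm h + norm k + 1"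
  define e where "e = \<epsilon> / (4 * c)"
  have c: "c > 0" "norm h + norm k < c"
    by (simp_all add: c_def add_nonneg_pos)
  have e: "e > 0"
    using \<open>\<epsilon> > 0\<close> c by (simp add: e_def)
  have "2 * e * (norm h + norm k) \<le> 2 * e * c"
    using e c(2) by simp
  also have "\<dots> = \<epsilon> / 2"
    using c(1) by (simp add: e_def)
  finally have e_small: "2 * e * (norm h + norm k) < \<epsilon>"
    using \<open>\<epsilon> > 0\<close> by linarith
  have "linear A"
    using A has_derivative_linear by blast
  obtain d where d: "d > 0"
    and est: "\<And>y. norm (y - x) < d \<Longrightarrow> norm (Df y h - Df x h - A (y - x)) \<le> e * norm (y - x)"
    using A e unfolding has_derivative_at_alt by blast
  obtain r where r: "r > 0" "ball x r \<subseteq> U"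
    using U open_contains_ball by blast
  have "\<forall>\<^sub>F s in at_right 0. 0 < s \<and> s < min r d / c"
    unfolding eventually_at_right_field using r(1) d c(1) by (intro exI[of _ "min r d / c"]) auto
  then show "\<forall>\<^sub>F s in at_right 0.
      dist ((f (x + s *\<^sub>R k + s *\<^sub>R h) - f (x + s *\<^sub>R h) - f (x + s *\<^sub>R k) + f x) / s\<^sup>2) (A k) < \<epsilon>"
  proof eventually_elim
    case (elim s)
    then have s: "0 < s" "s < min r d / c"
      by auto
    have "s * (norm h + norm k) < min r d"
      using s c mult_strict_left_mono[OF c(2), of s] by (simp add: field_simps)
    then have small: "cball x (s * (norm h + norm k)) \<subseteq> ball x r \<inter> ball x d"
      by auto
    have "\<bar>f (x + s *\<^sub>R k + s *\<^sub>R h) - f (x + s *\<^sub>R h) - f (x + s *\<^sub>R k) + f x - s\<^sup>2 * A k\<bar>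
          \<le> 2 * e * s\<^sup>2 * (norm h + norm k)"
    proof (rule second_difference_estimate[OF _ \<open>linear A\<close> s(1) less_imp_le[OF e]])
      fix y
      assume "y \<in> cball x (s * (norm h + norm k))"
      with small r(2) have "y \<in> U" "norm (y - x) < d"
        by (auto simp: dist_norm norm_minus_commute)
      then show "(f has_derivative Df y) (at y)"
        and "\<bar>Df y h - Df x h - A (y - x)\<bar> \<le> e * norm (y - x)"
        using Df est by auto
    qed
    then have "\<bar>(f (x + s *\<^sub>R k + s *\<^sub>R h) - f (x + s *\<^sub>R h) - f (x + s *\<^sub>R k) + f x) / s\<^sup>2 - A k\<bar>
          \<le> 2 * e * (norm h + norm k)"
      using s(1) by (simp add: field_simps)
    then show ?case
      using e_small by (simp add: dist_real_def)
  qed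
qed

lemma partial_derivatives_commute:
  fixes f :: "'a::real_normed_vector \<Rightarrow> real"
  assumes "open U" "x \<in> U"
    and "\<And>y. y \<in> U \<Longrightarrow> (f has_derivative Df y) (at y)"
    and "((\<lambda>y. Df y h) has_derivative A) (at x)"
    and "((\<lambda>y. Df y k) has_derivative B) (at x)"
  shows "A k = B h"
proof (rule tendsto_unique[OF trivial_limit_at_right_real])
  show "((\<lambda>s. (f (x + s *\<^sub>R k + s *\<^sub>R h) - f (x + s *\<^sub>R h) - f (x + s *\<^sub>R k) + f x) / s\<^sup>2)
           \<longlongrightarrow> A k) (at_right 0)"
    using second_difference_tendsto[OF assms(1-4)] .
  show "((\<lambda>s. (f (x + s *\<^sub>R k + s *\<^sub>R h) - f (x + s *\<^sub>R h) - f (x + s *\<^sub>R k) + f x) / s\<^sup>2)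
           \<longlongrightarrow> B h) (at_right 0)"
    using second_difference_tendsto[OF assms(1-3,5), of h] by (simp add: algebra_simps)
qed

lemma smooth_on_differentiable: "smooth_on U F \<Longrightarrow> x \<in> U \<Longrightarrow> dd F hs differentiable (at x)"
  by (simp add: smooth_on_def)

lemma dd_commute:
  fixes F :: "real \<times> real \<Rightarrow> 'b::real_inner"
  assumes F: "smooth_on U F" and U: "open U" "x \<in> U"
  shows "dd F [k, h] x = dd F [h, k] x"
proof -
  have "inner (dd F [k, h] x) v = inner (dd F [h, k] x) v" for v
  proof -
    let ?Df = "\<lambda>y k. inner (frechet_derivative F (at y) k) v"
    have Df: "((\<lambda>y. inner (F y) v) has_derivative ?Df y) (at y)" if "y \<in> U" for y
      using smooth_on_differentiable[OF F that, of "[]"]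
      by (auto simp: frechet_derivative_works intro!: derivative_eq_intros)
    have DDf: "((\<lambda>y. ?Df y l) has_derivative (\<lambda>m. inner (dd F [m, l] x) v)) (at x)" for l
      using smooth_on_differentiable[OF F U(2), of "[l]"]
      by (auto simp: frechet_derivative_works intro!: derivative_eq_intros)
    show ?thesis
      using partial_derivatives_commute[OF U Df DDf[of h] DDf[of k]] .
  qed
  from this[of "dd F [k, h] x - dd F [h, k] x"]
  have "inner (dd F [k, h] x - dd F [h, k] x) (dd F [k, h] x - dd F [h, k] x) = 0"
    by (simp only: inner_diff_left)
  then show ?thesis
    by simp
qed

lemma frechet_derivative_Pair:
  assumes "G differentiable (at x)"
  shows "frechet_derivative G (at x) (a, b) =
           a *\<^sub>R frechet_derivative G (at x) e1 + b *\<^sub>R frechet_derivative G (at x) e2"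
proof -
  have "linear (frechet_derivative G (at x))"
    using assms frechet_derivative_works has_derivative_linear by blast
  moreover have "(a, b) = a *\<^sub>R e1 + b *\<^sub>R e2"
    by simp
  ultimately show ?thesis
    by (simp only: linear_add linear_scale)
qed

lemma dd_Pair:
  assumes "smooth_on U F" "x \<in> U"
  shows "dd F ((a, b) # hs) x = a *\<^sub>R dd F (e1 # hs) x + b *\<^sub>R dd F (e2 # hs) x"
  unfolding dd.simps by (rule frechet_derivative_Pair[OF smooth_on_differentiable[OF assms]])

lemma dd_Pair_Pair:
  fixes F :: "real \<times> real \<Rightarrow> 'b::real_inner"
  assumes F: "smooth_on U F" and U: "open U" "x \<in> U"
  shows "dd F [(a, b), (a, b)] x =
           (a * a) *\<^sub>R dd F [e1, e1] x + (2 * a * b) *\<^sub>R dd F [e1, e2] x + (b * b) *\<^sub>R dd F [e2, e2] x"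
proof -
  let ?D = "\<lambda>h. frechet_derivative (dd F [h]) (at x)"
  have "(dd F [(a, b)] has_derivative (\<lambda>k. a *\<^sub>R ?D e1 k + b *\<^sub>R ?D e2 k)) (at x)"
  proof (rule has_derivative_transform_within_open[OF _ U])
    have "(dd F [h] has_derivative ?D h) (at x)" for h
      using smooth_on_differentiable[OF F U(2)] frechet_derivative_works by blast
    then show "((\<lambda>y. a *\<^sub>R dd F [e1] y + b *\<^sub>R dd F [e2] y) has_derivative (\<lambda>k. a *\<^sub>R ?D e1 k + b *\<^sub>R ?D e2 k)) (at x)"
      by (auto intro!: derivative_eq_intros)
    show "a *\<^sub>R dd F [e1] y + b *\<^sub>R dd F [e2] y = dd F [(a, b)] y" if "y \<in> U" for y
      using dd_Pair[OF F that, of a b "[]"] by simp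
  qed
  then have "frechet_derivative (dd F [(a, b)]) (at x) = (\<lambda>k. a *\<^sub>R ?D e1 k + b *\<^sub>R ?D e2 k)"
    by (rule frechet_derivative_at[symmetric])
  then have "dd F [(a, b), (a, b)] x = a *\<^sub>R dd F [(a, b), e1] x + b *\<^sub>R dd F [(a, b), e2] x"
    by (simp only: dd.simps)
  also have "\<dots> = (a * a) *\<^sub>R dd F [e1, e1] x + (a * b) *\<^sub>R (dd F [e2, e1] x + dd F [e1, e2] x)
      + (b * b) *\<^sub>R dd F [e2, e2] x"
    unfolding dd_Pair[OF F U(2), of a b "[e1]"] dd_Pair[OF F U(2), of a b "[e2]"]
    by (simp add: algebra_simps)
  finally show ?thesis
    using dd_commute[OF F U, of e2 e1] by (simp add: algebra_simps flip: scaleR_2)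
qed

lemma dd_inner_vanishing:
  fixes F :: "real \<times> real \<Rightarrow> 'b::real_inner"
  assumes F: "smooth_on U F" and U: "open U" "x \<in> U"
    and orth: "\<And>y. y \<in> U \<Longrightarrow> inner (dd F [h] y) (F y) = 0"
  shows "inner (dd F [k, h] x) (F x) = - inner (dd F [h] x) (dd F [k] x)"
proof -
  let ?A = "frechet_derivative (dd F [h]) (at x)" and ?B = "frechet_derivative F (at x)"
  have "(dd F [h] has_derivative ?A) (at x)" "(F has_derivative ?B) (at x)"
    using smooth_on_differentiable[OF F U(2), of "[h]"] smooth_on_differentiable[OF F U(2), of "[]"]
    by (simp_all only: dd.simps frechet_derivative_works)
  then have "((\<lambda>y. inner (dd F [h] y) (F y)) has_derivative (\<lambda>k. inner (dd F [h] x) (?B k) + inner (?A k) (F x))) (at x)"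
    by (auto intro!: derivative_eq_intros)
  moreover have "((\<lambda>y. inner (dd F [h] y) (F y)) has_derivative (\<lambda>k. 0)) (at x)"
    by (rule has_derivative_transform_within_open[OF _ U, of "\<lambda>y. 0"]) (use orth in \<open>auto simp del: dd.simps\<close>)
  ultimately have "(\<lambda>k. inner (dd F [h] x) (?B k) + inner (?A k) (F x)) = (\<lambda>k. 0)"
    by (rule has_derivative_unique)
  then have "inner (dd F [h] x) (?B k) + inner (?A k) (F x) = 0"
    by metis
  then show ?thesis
    by (simp only: dd.simps)
qed

section \<open>Second-order conditions at a maximum\<close>

lemma DERIV_local_max_second_order:
  fixes g :: "real \<Rightarrow> real"
  assumes d: "d > 0"
    and g': "\<And>t. \<bar>t\<bar> < d \<Longrightarrow> (g has_real_derivative g' t) (at t)"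
    and g'': "(g' has_real_derivative g'') (at 0)"
    and max: "\<And>t. \<bar>t\<bar> < d \<Longrightarrow> g t \<le> g 0"
  shows "g' 0 = 0" and "g'' \<le> 0"
proof -
  show g'0: "g' 0 = 0"
    by (rule DERIV_local_max[OF g'[of 0] d]) (use d max in auto)
  show "g'' \<le> 0"
  proof (rule ccontr)
    assume "\<not> g'' \<le> 0"
    then obtain e where e: "e > 0" "\<And>h. 0 < h \<Longrightarrow> h < e \<Longrightarrow> g' 0 < g' h"
      using DERIV_pos_inc_right[OF g''] by auto
    define t where "t = min e d / 2"
    have t: "0 < t" "t < e" "t < d"
      using e(1) d by (auto simp: t_def)
    then obtain z where z: "0 < z" "z < t" "g t - g 0 = (t - 0) * g' z"
      using MVT2[OF t(1), of g g'] g' by force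
    then have "0 < (t - 0) * g' z"
      using e(2)[of z] g'0 t by simp
    then show False
      using z(3) max[of t] t by simp
  qed
qed

lemma local_max_norm_second_order:
  fixes z :: "real \<Rightarrow> 'a::real_inner"
  assumes d: "d > 0"
    and z': "\<And>t. \<bar>t\<bar> < d \<Longrightarrow> (z has_vector_derivative z' t) (at t)"
    and z'': "(z' has_vector_derivative z'') (at 0)"
    and max: "\<And>t. \<bar>t\<bar> < d \<Longrightarrow> norm (z t) \<le> norm (z 0)"
  shows "inner (z 0) (z' 0) = 0" and "inner (z 0) z'' + (norm (z' 0))\<^sup>2 \<le> 0"
proof -
  have g': "((\<lambda>t. inner (z t) (z t)) has_real_derivative 2 * inner (z t) (z' t)) (at t)"
    if "\<bar>t\<bar> < d" for t
    using z'[OF that] unfolding has_vector_derivative_def has_field_derivative_def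
    by (auto intro!: derivative_eq_intros simp: inner_commute algebra_simps)
  have g'': "((\<lambda>t. 2 * inner (z t) (z' t)) has_real_derivative
      2 * (inner (z' 0) (z' 0) + inner (z 0) z'')) (at 0)"
  proof -
    have "(z has_vector_derivative z' 0) (at 0)"
      using z' d by simp
    with z'' show ?thesis
      unfolding has_vector_derivative_def has_field_derivative_def
      by (auto intro!: derivative_eq_intros simp: algebra_simps)
  qed
  have g_max: "inner (z t) (z t) \<le> inner (z 0) (z 0)" if "\<bar>t\<bar> < d" for t
    using max[OF that] by (simp add: dot_square_norm power_mono)
  note DERIV_local_max_second_order[OF d g' g'' g_max]
  then show "inner (z 0) (z' 0) = 0" and "inner (z 0) z'' + (norm (z' 0))\<^sup>2 \<le> 0"
    by (simp_all add: dot_square_norm)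
qed

lemma smooth_on_local_max_second_order:
  fixes F :: "real \<times> real \<Rightarrow> 'a::real_normed_vector" and L :: "'a \<Rightarrow> 'b::real_inner"
  assumes L: "bounded_linear L" and F: "smooth_on U F" and U: "open U" "x \<in> U"
    and max: "\<And>y. y \<in> U \<Longrightarrow> norm (L (F y)) \<le> norm (L (F x))"
  shows "inner (L (F x)) (L (dd F [h] x)) = 0"
    and "inner (L (F x)) (L (dd F [h, h] x)) + (norm (L (dd F [h] x)))\<^sup>2 \<le> 0"
proof -
  obtain r where r: "r > 0" "ball x r \<subseteq> U"
    using U open_contains_ball by blast
  have h1: "norm h + 1 > 0"
    by (simp add: add_nonneg_pos)
  define d where "d = r / (norm h + 1)"
  have d: "d > 0"
    using r(1) h1 by (simp add: d_def)
  have line: "x + t *\<^sub>R h \<in> U" if "\<bar>t\<bar> < d" for t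
  proof -
    have "norm (t *\<^sub>R h) \<le> \<bar>t\<bar> * (norm h + 1)"
      by (simp add: mult_left_mono)
    also have "\<dots> < d * (norm h + 1)"
      using that h1 by simp
    also have "\<dots> = r"
      using h1 by (simp add: d_def)
    finally have "norm (t *\<^sub>R h) < r" .
    then show ?thesis
      using r(2) by (auto simp: dist_norm)
  qed
  have deriv: "((\<lambda>t. L (dd F hs (x + t *\<^sub>R h))) has_vector_derivative L (dd F (h # hs) (x + t *\<^sub>R h))) (at t)"
    if "\<bar>t\<bar> < d" for hs t
  proof -
    have "((\<lambda>y. L (dd F hs y)) has_derivative (\<lambda>k. L (frechet_derivative (dd F hs) (at (x + t *\<^sub>R h)) k)))
        (at (x + t *\<^sub>R h))"
      using smooth_on_differentiable[OF F line[OF that], of hs]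
      by (intro bounded_linear.has_derivative[OF L]) (simp add: frechet_derivative_works)
    from has_vector_derivative_along_line[OF this] show ?thesis
      by simp
  qed
  have "(\<lambda>t. L (dd F [] (x + t *\<^sub>R h))) = (\<lambda>t. L (F (x + t *\<^sub>R h)))"
    by simp
  note second_order = local_max_norm_second_order[OF d deriv[of _ "[]", unfolded this] deriv[of 0 "[h]"]]
  from second_order max line d show "inner (L (F x)) (L (dd F [h] x)) = 0"
    and "inner (L (F x)) (L (dd F [h, h] x)) + (norm (L (dd F [h] x)))\<^sup>2 \<le> 0"
    by auto
qed

section \<open>Minimal Lagrangian pieces\<close>

definition gram_det :: "(real \<times> real \<Rightarrow> 'b::real_inner) \<Rightarrow> real \<times> real \<Rightarrow> real" where
  "gram_det F x = inner (dd F [e1] x) (dd F [e1] x) * inner (dd F [e2] x) (dd F [e2] x)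
     - (inner (dd F [e1] x) (dd F [e2] x))\<^sup>2"

(* det g * g^ij F_ij, the vector constrained in min_lag_piece_def *)
definition adj_trace_hessian :: "(real \<times> real \<Rightarrow> 'b::real_inner) \<Rightarrow> real \<times> real \<Rightarrow> 'b" where
  "adj_trace_hessian F x =
     inner (dd F [e2] x) (dd F [e2] x) *\<^sub>R dd F [e1, e1] x
     - (2 * inner (dd F [e1] x) (dd F [e2] x)) *\<^sub>R dd F [e1, e2] x
     + inner (dd F [e1] x) (dd F [e1] x) *\<^sub>R dd F [e2, e2] x"

lemma min_lag_pieceD:
  assumes "min_lag_piece U F" "x \<in> U"
  shows "open U" "smooth_on U F" "F x \<in> S5"
    and "\<And>a b. a *\<^sub>R dd F [e1] x + b *\<^sub>R dd F [e2] x = 0 \<Longrightarrow> a = 0 \<and> b = 0"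
    and "herm (dd F [e1] x) (F x) = 0" "herm (dd F [e2] x) (F x) = 0"
    and "Im (herm (dd F [e1] x) (dd F [e2] x)) = 0"
    and "adj_trace_hessian F x \<in> span {F x, \<i> *s F x, dd F [e1] x, dd F [e2] x}"
  using assms unfolding min_lag_piece_def adj_trace_hessian_def Let_def by blast+

lemma adj_trace_hessian_normal_part:
  assumes piece: "min_lag_piece U F" and x: "x \<in> U"
  obtains \<beta> \<gamma> \<delta> where "adj_trace_hessian F x =
    (- 2 * gram_det F x) *\<^sub>R F x + \<beta> *\<^sub>R (\<i> *s F x) + \<gamma> *\<^sub>R dd F [e1] x + \<delta> *\<^sub>R dd F [e2] x"
proof -
  note P = min_lag_pieceD[OF piece x]
  let ?T = "adj_trace_hessian F x"
  obtain \<alpha> \<beta> \<gamma> \<delta> where T: "?T = \<alpha> *\<^sub>R F x + \<beta> *\<^sub>R (\<i> *s F x) + \<gamma> *\<^sub>R dd F [e1] x + \<delta> *\<^sub>R dd F [e2] x"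
  proof -
    from P(8) obtain k1 where "?T - k1 *\<^sub>R F x \<in> span {\<i> *s F x, dd F [e1] x, dd F [e2] x}"
      using span_breakdown_eq by blast
    then obtain k2 where "?T - k1 *\<^sub>R F x - k2 *\<^sub>R (\<i> *s F x) \<in> span {dd F [e1] x, dd F [e2] x}"
      using span_breakdown_eq by blast
    then obtain k3 where "?T - k1 *\<^sub>R F x - k2 *\<^sub>R (\<i> *s F x) - k3 *\<^sub>R dd F [e1] x \<in> span {dd F [e2] x}"
      using span_breakdown_eq by blast
    then obtain k4 where "?T - k1 *\<^sub>R F x - k2 *\<^sub>R (\<i> *s F x) - k3 *\<^sub>R dd F [e1] x - k4 *\<^sub>R dd F [e2] x \<in> span {}"
      using span_breakdown_eq by blast
    then show ?thesis
      using that[of k1 k2 k3 k4] by (simp add: algebra_simps)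
  qed
  have tangent_orth: "inner (dd F [h] y) (F y) = 0" if "y \<in> U" "h \<in> {e1, e2}" for h y
    using min_lag_pieceD(5,6)[OF piece that(1)] that(2) by (auto simp flip: Re_herm simp del: dd.simps)
  have "inner (dd F [k, h] x) (F x) = - inner (dd F [h] x) (dd F [k] x)" if "h \<in> {e1, e2}" for h k
    using dd_inner_vanishing[OF P(2,1) x tangent_orth] that by blast
  then have "inner ?T (F x) = - 2 * gram_det F x"
    unfolding adj_trace_hessian_def gram_det_def
    by (simp add: inner_add_left inner_diff_left inner_commute power2_eq_square algebra_simps del: dd.simps)
  moreover have "inner ?T (F x) = \<alpha>"
    using tangent_orth[OF x] P(3) unfolding T
    by (simp add: inner_add_left inner_commute[of "\<i> *s F x"] S5_def dot_square_norm del: dd.simps)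
  ultimately show ?thesis
    using that T by metis
qed

lemma herm_adj_trace_hessian_critical:
  assumes piece: "min_lag_piece U F" and x: "x \<in> U"
    and critical: "inner (herm q (F x)) (herm q (dd F [e1] x)) = 0"
      "inner (herm q (F x)) (herm q (dd F [e2] x)) = 0"
  shows "inner (herm q (F x)) (herm q (adj_trace_hessian F x))
           = - 2 * gram_det F x * (cmod (herm q (F x)))\<^sup>2"
proof -
  obtain \<beta> \<gamma> \<delta> where "adj_trace_hessian F x =
      (- 2 * gram_det F x) *\<^sub>R F x + \<beta> *\<^sub>R (\<i> *s F x) + \<gamma> *\<^sub>R dd F [e1] x + \<delta> *\<^sub>R dd F [e2] x"
    using adj_trace_hessian_normal_part[OF piece x] by blast
  moreover have "inner c (\<i> * c) = 0" for c :: complex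
    by (simp add: inner_complex_def)
  ultimately show ?thesis
    using critical
    by (simp add: herm_diff_right herm_add_right herm_scaleR_right herm_smult_right
        inner_add_right inner_diff_right dot_square_norm del: dd.simps)
qed

lemma min_lag_piece_tangent_herm_sum:
  assumes piece: "min_lag_piece U F" and x: "x \<in> U"
    and chol: "a1\<^sup>2 = inner (dd F [e2] x) (dd F [e2] x)"
      "a1 * b1 = - inner (dd F [e1] x) (dd F [e2] x)"
      "b1\<^sup>2 + b2\<^sup>2 = inner (dd F [e1] x) (dd F [e1] x)"
  defines "w1 \<equiv> a1 *\<^sub>R dd F [e1] x + b1 *\<^sub>R dd F [e2] x" and "w2 \<equiv> b2 *\<^sub>R dd F [e2] x"
  shows "(cmod (herm q w1))\<^sup>2 + (cmod (herm q w2))\<^sup>2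
           = gram_det F x * (inner q q - (cmod (herm q (F x)))\<^sup>2)"
proof -
  note P = min_lag_pieceD[OF piece x]
  define D where "D = gram_det F x"
  have D: "D > 0"
    using gram_det_pos(2)[OF P(4)] by (simp add: D_def gram_det_def)
  note gram = cholesky_frame_gram[OF chol, folded w1_def w2_def gram_det_def D_def]
  have herm_w: "herm w1 w1 = D" "herm w2 w2 = D"
    using gram by (simp_all add: herm_self)
  have "herm (F x) (dd F [e1] x) = 0" "herm (F x) (dd F [e2] x) = 0"
    using P(5,6) by (simp_all add: herm_commute[of "F x"])
  then have herm_F_w: "herm (F x) w1 = 0" "herm (F x) w2 = 0"
    unfolding w1_def w2_def by (simp_all add: herm_add_right herm_scaleR_right)
  have "Im (herm w1 w2) = 0"
    using P(7) unfolding w1_def w2_def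
    by (simp add: herm_add_left herm_scaleR_left herm_scaleR_right herm_self)
  then have herm_w12: "herm w1 w2 = 0"
    using gram(3) by (simp add: complex_eq_iff Re_herm)
  define s where "s = 1 / sqrt D"
  have s: "s * s * D = 1"
    using D by (simp add: s_def)
  \<comment> \<open>Legendrian and Lagrangian: \<open>F x, w1 / sqrt D, w2 / sqrt D\<close> is a unitary frame\<close>
  have "inner q q = (cmod (herm q (F x)))\<^sup>2 + (cmod (herm q (s *\<^sub>R w1)))\<^sup>2 + (cmod (herm q (s *\<^sub>R w2)))\<^sup>2"
  proof (rule inner_self_eq_sum_herm_unitary)
    show "herm (F x) (F x) = 1"
      using P(3) by (simp add: herm_self S5_def dot_square_norm)
    show "herm (s *\<^sub>R w1) (s *\<^sub>R w1) = 1" "herm (s *\<^sub>R w2) (s *\<^sub>R w2) = 1"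
      using herm_w s
      by (simp_all add: herm_scaleR_left herm_scaleR_right scaleR_conv_of_real[where 'a=complex] mult.assoc
          flip: of_real_mult)
    show "herm (F x) (s *\<^sub>R w1) = 0" "herm (F x) (s *\<^sub>R w2) = 0" "herm (s *\<^sub>R w1) (s *\<^sub>R w2) = 0"
      using herm_F_w herm_w12 by (simp_all add: herm_scaleR_left herm_scaleR_right)
  qed
  also have "\<dots> = (cmod (herm q (F x)))\<^sup>2 + s * s * ((cmod (herm q w1))\<^sup>2 + (cmod (herm q w2))\<^sup>2)"
    by (simp add: herm_scaleR_right norm_mult power_mult_distrib power2_eq_square algebra_simps)
  finally have "D * (inner q q - (cmod (herm q (F x)))\<^sup>2)
      = (s * s * D) * ((cmod (herm q w1))\<^sup>2 + (cmod (herm q w2))\<^sup>2)"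
    by (simp add: algebra_simps)
  then show ?thesis
    using s unfolding D_def by (metis mult_1)
qed

lemma min_lag_piece_max_cmod_herm_sq_ge:
  assumes piece: "min_lag_piece U F" and x: "x \<in> U" and q: "q \<in> S5"
    and max: "\<And>y. y \<in> U \<Longrightarrow> cmod (herm q (F y)) \<le> cmod (herm q (F x))"
  shows "1 / 3 \<le> (cmod (herm q (F x)))\<^sup>2"
proof -
  note P = min_lag_pieceD[OF piece x]
  define c where "c = herm q (F x)"
  define D where "D = gram_det F x"
  let ?Fu = "dd F [e1] x" and ?Fv = "dd F [e2] x"
  note second_order = smooth_on_local_max_second_order[OF bounded_linear_herm_right P(2,1) x max, folded c_def]
  have "0 < inner ?Fv ?Fv" "0 < D"
    using gram_det_pos[OF P(4)] by (simp_all add: D_def gram_det_def)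
  then obtain a1 b1 b2 where chol: "a1\<^sup>2 = inner ?Fv ?Fv" "a1 * b1 = - inner ?Fu ?Fv" "b1\<^sup>2 + b2\<^sup>2 = inner ?Fu ?Fu"
    using adjugate_cholesky[of "inner ?Fv ?Fv" "inner ?Fu ?Fu" "inner ?Fu ?Fv"]
    by (auto simp: D_def gram_det_def simp del: dd.simps)
  define w1 where "w1 = a1 *\<^sub>R ?Fu + b1 *\<^sub>R ?Fv"
  define w2 where "w2 = b2 *\<^sub>R ?Fv"
  have dir: "dd F [(a1, b1)] x = w1" "dd F [(0, b2)] x = w2"
    using dd_Pair[OF P(2) x, of a1 b1 "[]"] dd_Pair[OF P(2) x, of 0 b2 "[]"]
    unfolding w1_def w2_def by (simp_all del: dd.simps)
  \<comment> \<open>the second derivatives along \<open>(a1, b1)\<close> and \<open>(0, b2)\<close> add up to the \<open>adj g\<close>-trace\<close>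
  have "dd F [(a1, b1), (a1, b1)] x + dd F [(0, b2), (0, b2)] x
      = a1\<^sup>2 *\<^sub>R dd F [e1, e1] x + (2 * (a1 * b1)) *\<^sub>R dd F [e1, e2] x + (b1\<^sup>2 + b2\<^sup>2) *\<^sub>R dd F [e2, e2] x"
    unfolding dd_Pair_Pair[OF P(2,1) x, of a1 b1] dd_Pair_Pair[OF P(2,1) x, of 0 b2]
    by (simp add: scaleR_add_left power2_eq_square mult.assoc del: dd.simps)
  also have "\<dots> = adj_trace_hessian F x"
    unfolding chol adj_trace_hessian_def by simp
  finally have hess: "dd F [(a1, b1), (a1, b1)] x + dd F [(0, b2), (0, b2)] x = adj_trace_hessian F x" .
  have "inner c (herm q (adj_trace_hessian F x)) + (cmod (herm q w1))\<^sup>2 + (cmod (herm q w2))\<^sup>2 \<le> 0"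
    using second_order(2)[of "(a1, b1)"] second_order(2)[of "(0, b2)"]
    unfolding hess[symmetric] dir[symmetric]
    by (simp add: herm_add_right inner_add_right del: dd.simps)
  moreover have "inner c (herm q (adj_trace_hessian F x)) = - 2 * D * (cmod c)\<^sup>2"
    using herm_adj_trace_hessian_critical[OF piece x] second_order(1)[of e1] second_order(1)[of e2]
    unfolding c_def D_def by blast
  moreover have "(cmod (herm q w1))\<^sup>2 + (cmod (herm q w2))\<^sup>2 = D * (1 - (cmod c)\<^sup>2)"
    using min_lag_piece_tangent_herm_sum[OF piece x chol, of q] q
    by (simp add: w1_def w2_def D_def c_def S5_def dot_square_norm)
  ultimately have "D * (1 - 3 * (cmod c)\<^sup>2) \<le> 0"
    by (simp add: algebra_simps)
  then show ?thesis
    using \<open>0 < D\<close> by (simp add: c_def mult_le_0_iff)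
qed

lemma fs_setdist_le_fs_dist:
  assumes "q \<in> S5" "Mt \<subseteq> S5" "w \<in> Mt"
  shows "fs_setdist q Mt \<le> fs_dist q w"
  unfolding fs_setdist_def
proof (rule cINF_lower[OF bdd_belowI assms(3)])
  fix z
  assume "z \<in> fs_dist q ` Mt"
  then obtain v where "v \<in> Mt" "z = fs_dist q v"
    by blast
  moreover have "cmod (herm q v) \<le> 1"
    using cmod_herm_le_norm[of q v] assms(1,2) \<open>v \<in> Mt\<close> by (auto simp: S5_def)
  moreover have "- 1 \<le> cmod (herm q v)"
    by (rule order_trans[OF _ norm_ge_zero]) simp
  ultimately show "0 \<le> z"
    by (simp add: fs_dist_def arccos_lbound)
qed

theorem theorem7p2:
  fixes Mt :: "(complex^3) set" and q :: "complex^3"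
  assumes "compact_min_lag_surface Mt"
    and "q \<in> S5"
  shows "fs_setdist q Mt \<le> arccos (1 / sqrt 3)"
proof -
  have Mt: "Mt \<noteq> {}" "compact Mt" "Mt \<subseteq> S5"
    using assms(1) unfolding compact_min_lag_surface_def hopf_saturated_def by auto
  have "continuous_on Mt (\<lambda>w. cmod (herm q w))"
    unfolding herm_def by (intro continuous_intros)
  then obtain p where p: "p \<in> Mt" "\<And>w. w \<in> Mt \<Longrightarrow> cmod (herm q w) \<le> cmod (herm q p)"
    using continuous_attains_sup[OF Mt(2,1)] by blast
  then obtain U F x where piece: "min_lag_piece U F" "x \<in> U" "p = F x" "F ` U \<subseteq> Mt"
    using assms(1) unfolding compact_min_lag_surface_def by blast
  then have "1 / 3 \<le> (cmod (herm q p))\<^sup>2"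
    using min_lag_piece_max_cmod_herm_sq_ge[OF piece(1,2) assms(2)] p(2) by blast
  then have "1 / sqrt 3 \<le> cmod (herm q p)"
    by (metis real_sqrt_abs real_sqrt_divide real_sqrt_le_mono real_sqrt_one abs_norm_cancel)
  moreover have "cmod (herm q p) \<le> 1"
    using cmod_herm_le_norm[of q p] assms(2) p(1) Mt(3) by (auto simp: S5_def)
  ultimately have "fs_dist q p \<le> arccos (1 / sqrt 3)"
    unfolding fs_dist_def by (intro arccos_le_arccos) (auto intro: order_trans[of _ 0])
  then show ?thesis
    using fs_setdist_le_fs_dist[OF assms(2) Mt(3) p(1)] by linarith
qed

end
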